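(* Let $\mathfrak g$ be an affine Kac–Moody algebra with index set $I$, Weyl group $W$ and simple reflections $r_i$ ($i\in I$). Let $B$ be a perfect crystal of level $l$, let $\lambda$ be a dominant integral weight of level $l$, and let $\overline{b}_k$, $\lambda_k$ ($k\ge 1$) and the isomorphism $\mathcal B(\lambda)\simeq\mathcal P(\lambda,B)$ be as in the context. Fix a positive integer $d$ and elements $i^{(j)}_a\in I$ ($j\ge1$, $1\le a\le d$); set $i^{(j)}_{d+1}:=i^{(j+1)}_1$. Define $w^{(0)}=1$ and, for $k>0$, $w^{(k)}=r_{i^{(j)}_a}w^{(k-1)}$, where $k=(j-1)d+a$ with $j\ge1$, $1\le a\le d$. Define $b^{(j)}_0=\overline{b}_j$ and $b^{(j)}_a=\tilde f_{i^{(j)}_a}^{\varphi_{i^{(j)}_a}(b^{(j)}_{a-1})}b^{(j)}_{a-1}$ for $1\le a\le d$, and define $B^{(j)}_0=\{\overline b_j\}$, $B^{(j)}_a=\bigcup_{n\ge0}\tilde f_{i^{(j)}_a}^nB^{(j)}_{a-1}\setminus\{0\}$ ($1\le a\le d$). Assume: (III) for all $j\ge1$ and $1\le a\le d$, $\langle\lambda_j,h_{i^{(j)}_a}\rangle\le\varepsilon_{i^{(j)}_a}(b)$ for all $b\in B^{(j)}_{a-1}$. Assume moreover that for every $j\ge1$: $\varepsilon_{i^{(j)}_{a+1}}(b^{(j)}_a)=0$ and $\varphi_{i^{(j)}_{a+1}}(b^{(j)}_a)>0$ for $a=1,\dots,d$, and $b^{(j+1)}_0=\tilde f_{i^{(j+1)}_1}^{m^{(j+1)}}b^{(j)}_d$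 with $m^{(j+1)}=\langle\lambda_{j+1},h_{i^{(j+1)}_1}\rangle$. Then for every $k\ge0$, writing $k=(j-1)d+a$ with $j\ge1$, $1\le a\le d$ if $k>0$, and $j=1$, $a=0$ if $k=0$, the extremal vector $u_{w^{(k)}\lambda}$ corresponds under $\mathcal B(\lambda)\simeq\mathcal P(\lambda,B)$ to the path $$u_{w^{(k)}\lambda}=\cdots\otimes\overline b_{j+2}\otimes\overline b_{j+1}\otimes\big(b^{(j)}_a\big)^{\otimes j}.$$
   Context: $U_q(\mathfrak g)$ is the quantized enveloping algebra, $\mathcal B(\lambda)$ the crystal base of the irreducible integrable highest weight module $V(\lambda)$ with highest weight element $u_\lambda$; $\tilde e_i,\tilde f_i$ are Kashiwara operators, $\varepsilon_i(b)=\max\{n:\tilde e_i^nb\ne0\}$, $\varphi_i(b)=\max\{n:\tilde f_i^nb\neq0\}$, and tensor products of crystals follow Kashiwara's tensor product rule (convention of Kang–Kashiwara–Misra–Miwa–Nakashima–Nakayashiki). $B$ is a perfect crystal of level $l$ (a crystal of a finite-dimensional $U_q'(\mathfrak g)$-module in the sense of Kang et al.); for each level-$l$ dominant weight $\mu$ there is a unique $b(\mu)\in B$ with $\varphi(b(\mu))=\mu$ (where $\varphi(b)=\sum_i\varphi_i(b)\Lambda_i$, $\varepsilon(b)=\sum_i\varepsilon_i(b)\Lambda_i$), and $\sigma\mu:=\varepsilon(b(\mu))$. Set $\lambda_k=\sigma^k\lambda$ ($\lambda_0=\lambda$) and $\overline b_k=b(\lambda_{k-1})$. Perfectness gives crystal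 isomorphisms $\mathcal B(\lambda_{k-1})\simeq\mathcal B(\lambda_k)\otimes B$, $u_{\lambda_{k-1}}\mapsto u_{\lambda_k}\otimes\overline b_k$; iterating yields $\mathcal B(\lambda)\simeq\mathcal P(\lambda,B)=\{\cdots\otimes p(2)\otimes p(1): p(j)\in B,\ p(k)=\overline b_k\text{ for }k\gg1\}$, with $u_\lambda\mapsto\cdots\otimes\overline b_2\otimes\overline b_1$. For $w\in W$, $u_{w\lambda}$ denotes the unique element of $\mathcal B(\lambda)$ of weight $w\lambda$ (the extremal vector; the weight space $V(\lambda)_{w\lambda}$ is one-dimensional). *)

theory Defs
  imports Complex_Main
begin

text \<open>Convention: A i j = <h_i, alpha_j>. Weights in P_cl are represented by their
coordinates mu i = <h_i, mu> in the basis of fundamental weights Lambda_i, so that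
cl(alpha_j) has coordinates (\<lambda>i. A i j).\<close>

definition gcm :: "('i \<Rightarrow> 'i \<Rightarrow> int) \<Rightarrow> bool" where
  "gcm A \<longleftrightarrow> (\<forall>i. A i i = 2) \<and> (\<forall>i j. i \<noteq> j \<longrightarrow> A i j \<le> 0)
     \<and> (\<forall>i j. A i j = 0 \<longleftrightarrow> A j i = 0)"

definition indecomposable :: "('i \<Rightarrow> 'i \<Rightarrow> int) \<Rightarrow> bool" where
  "indecomposable A \<longleftrightarrow>
     (\<forall>J. J \<noteq> {} \<and> J \<noteq> UNIV \<longrightarrow> (\<exists>j\<in>J. \<exists>k\<in>-J. A j k \<noteq> 0))"

text \<open>Kac, Infinite dimensional Lie algebras, Thm 4.3, type (Aff).\<close>
definition affine_gcm :: "('i::finite \<Rightarrow> 'i \<Rightarrow> int) \<Rightarrow> bool" where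
  "affine_gcm A \<longleftrightarrow> gcm A \<and> indecomposable A \<and>
     (\<exists>u::'i \<Rightarrow> real. (\<forall>i. u i > 0) \<and> (\<forall>i. (\<Sum>j\<in>UNIV. of_int (A i j) * u j) = 0) \<and>
        (\<forall>v::'i \<Rightarrow> real. (\<forall>i. (\<Sum>j\<in>UNIV. of_int (A i j) * v j) = 0)
              \<longrightarrow> (\<exists>t. v = (\<lambda>j. t * u j)))) \<and>
     (\<forall>v::'i \<Rightarrow> real. (\<forall>i. (\<Sum>j\<in>UNIV. of_int (A i j) * v j) \<ge> 0)
              \<longrightarrow> (\<forall>i. (\<Sum>j\<in>UNIV. of_int (A i j) * v j) = 0))"

text \<open>Labels a_i of delta = sum a_i alpha_i, and dual labels a_i^vee of the canonical
central element c = sum a_i^vee h_i.\<close>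
definition null_root_coeffs :: "('i::finite \<Rightarrow> 'i \<Rightarrow> int) \<Rightarrow> ('i \<Rightarrow> nat) \<Rightarrow> bool" where
  "null_root_coeffs A a \<longleftrightarrow> (\<forall>i. a i > 0) \<and> (\<forall>i. (\<Sum>j\<in>UNIV. A i j * int (a j)) = 0)
     \<and> Gcd (range a) = 1"

definition null_coroot_coeffs :: "('i::finite \<Rightarrow> 'i \<Rightarrow> int) \<Rightarrow> ('i \<Rightarrow> nat) \<Rightarrow> bool" where
  "null_coroot_coeffs A c \<longleftrightarrow> (\<forall>i. c i > 0) \<and> (\<forall>j. (\<Sum>i\<in>UNIV. int (c i) * A i j) = 0)
     \<and> Gcd (range c) = 1"

definition delta_coeffs :: "('i::finite \<Rightarrow> 'i \<Rightarrow> int) \<Rightarrow> 'i \<Rightarrow> nat" where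
  "delta_coeffs A = (THE a. null_root_coeffs A a)"

definition cvee :: "('i::finite \<Rightarrow> 'i \<Rightarrow> int) \<Rightarrow> 'i \<Rightarrow> nat" where
  "cvee A = (THE c. null_coroot_coeffs A c)"

text \<open>Kac's node 0: a_0^vee = 1, and a_0 = 1 except for A_{2n}^(2) where node 0 is the
unique node with a^vee = 1.\<close>
definition special_node :: "('i::finite \<Rightarrow> 'i \<Rightarrow> int) \<Rightarrow> 'i \<Rightarrow> bool" where
  "special_node A i0 \<longleftrightarrow> cvee A i0 = 1 \<and>
     (delta_coeffs A i0 = 1 \<or> (\<forall>j. cvee A j = 1 \<longrightarrow> j = i0))"

definition level :: "('i::finite \<Rightarrow> 'i \<Rightarrow> int) \<Rightarrow> ('i \<Rightarrow> nat) \<Rightarrow> nat" where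
  "level A mu = (\<Sum>i\<in>UNIV. cvee A i * mu i)"

definition levelz :: "('i::finite \<Rightarrow> 'i \<Rightarrow> int) \<Rightarrow> ('i \<Rightarrow> int) \<Rightarrow> int" where
  "levelz A mu = (\<Sum>i\<in>UNIV. int (cvee A i) * mu i)"

text \<open>A crystal: weight map to P_cl and Kashiwara operators; None stands for 0.\<close>
record ('i, 'b) crystal =
  wt :: "'b \<Rightarrow> 'i \<Rightarrow> int"
  ee :: "'i \<Rightarrow> 'b \<Rightarrow> 'b option"
  ff :: "'i \<Rightarrow> 'b \<Rightarrow> 'b option"

definition iter_opt :: "('b \<Rightarrow> 'b option) \<Rightarrow> nat \<Rightarrow> 'b \<Rightarrow> 'b option" where
  "iter_opt g n b = ((\<lambda>x. Option.bind x g) ^^ n) (Some b)"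

definition maxiter :: "('b \<Rightarrow> 'b option) \<Rightarrow> 'b \<Rightarrow> nat" where
  "maxiter g b = (GREATEST n. iter_opt g n b \<noteq> None)"

definition eps :: "('i, 'b, 'z) crystal_scheme \<Rightarrow> 'i \<Rightarrow> 'b \<Rightarrow> nat" where
  "eps C i b = maxiter (ee C i) b"

definition phi :: "('i, 'b, 'z) crystal_scheme \<Rightarrow> 'i \<Rightarrow> 'b \<Rightarrow> nat" where
  "phi C i b = maxiter (ff C i) b"

definition eps_vec :: "('i, 'b, 'z) crystal_scheme \<Rightarrow> 'b \<Rightarrow> 'i \<Rightarrow> nat" where
  "eps_vec C b = (\<lambda>i. eps C i b)"

definition phi_vec :: "('i, 'b, 'z) crystal_scheme \<Rightarrow> 'b \<Rightarrow> 'i \<Rightarrow> nat" where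
  "phi_vec C b = (\<lambda>i. phi C i b)"

definition is_crystal :: "('i \<Rightarrow> 'i \<Rightarrow> int) \<Rightarrow> ('i, 'b, 'z) crystal_scheme \<Rightarrow> bool" where
  "is_crystal A C \<longleftrightarrow>
     (\<forall>i b b'. ff C i b = Some b' \<longleftrightarrow> ee C i b' = Some b) \<and>
     (\<forall>i b b'. ff C i b = Some b' \<longrightarrow> wt C b' = (\<lambda>j. wt C b j - A j i)) \<and>
     (\<forall>i b. \<exists>n. iter_opt (ee C i) n b = None) \<and>
     (\<forall>i b. \<exists>n. iter_opt (ff C i) n b = None) \<and>
     (\<forall>i b. int (phi C i b) - int (eps C i b) = wt C b i)"

text \<open>Kashiwara's tensor product rule (KKMMNN convention) for f_i on B \<otimes> B.\<close>
definition tensor_f :: "('i, 'b, 'z) crystal_scheme \<Rightarrow> 'i \<Rightarrow> 'b \<times> 'b \<Rightarrow> ('b \<times> 'b) option" where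
  "tensor_f C i x = (case x of (b1, b2) \<Rightarrow>
     if eps C i b2 < phi C i b1 then map_option (\<lambda>y. (y, b2)) (ff C i b1)
     else map_option (\<lambda>y. (b1, y)) (ff C i b2))"

definition tensor_connected :: "('i, 'b, 'z) crystal_scheme \<Rightarrow> bool" where
  "tensor_connected C \<longleftrightarrow>
     (let E = {(x, z). \<exists>i. tensor_f C i x = Some z} in \<forall>x y. (x, y) \<in> (E \<union> E\<inverse>)\<^sup>*)"

text \<open>Perfect crystal of level l (KKMMNN, Def. 4.6.1); the crystal is the whole
(finite) type 'b.\<close>
definition perfect_crystal ::
  "('i::finite \<Rightarrow> 'i \<Rightarrow> int) \<Rightarrow> 'i \<Rightarrow> ('i, 'b::finite, 'z) crystal_scheme \<Rightarrow> nat \<Rightarrow> bool" where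
  "perfect_crystal A i0 C l \<longleftrightarrow> l > 0 \<and> is_crystal A C \<and>
     (\<forall>b. levelz A (wt C b) = 0) \<and>
     tensor_connected C \<and>
     (\<exists>lam0. (\<forall>b. \<exists>n::'i \<Rightarrow> nat. n i0 = 0 \<and>
                  wt C b = (\<lambda>j. lam0 j - (\<Sum>i\<in>UNIV. int (n i) * A j i)))
             \<and> card {b. wt C b = lam0} = 1) \<and>
     (\<forall>b. level A (eps_vec C b) \<ge> l) \<and>
     bij_betw (eps_vec C) {b. level A (eps_vec C b) = l} {mu. level A mu = l} \<and>
     bij_betw (phi_vec C) {b. level A (phi_vec C b) = l} {mu. level A mu = l}"

definition bmu :: "('i, 'b, 'z) crystal_scheme \<Rightarrow> ('i \<Rightarrow> nat) \<Rightarrow> 'b" where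
  "bmu C mu = (THE b. phi_vec C b = mu)"

definition sigma :: "('i, 'b, 'z) crystal_scheme \<Rightarrow> ('i \<Rightarrow> nat) \<Rightarrow> 'i \<Rightarrow> nat" where
  "sigma C mu = eps_vec C (bmu C mu)"

definition lamk :: "('i, 'b, 'z) crystal_scheme \<Rightarrow> ('i \<Rightarrow> nat) \<Rightarrow> nat \<Rightarrow> 'i \<Rightarrow> nat" where
  "lamk C lam k = (sigma C ^^ k) lam"

text \<open>bbar C lam k = b-bar_k = b(lambda_{k-1}) for k >= 1.\<close>
definition bbar :: "('i, 'b, 'z) crystal_scheme \<Rightarrow> ('i \<Rightarrow> nat) \<Rightarrow> nat \<Rightarrow> 'b" where
  "bbar C lam k = bmu C (lamk C lam (k - 1))"

text \<open>Paths are 0-indexed: p n is the tensor factor p(n+1) of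
 ... \<otimes> p(2) \<otimes> p(1).\<close>
definition ground :: "('i, 'b, 'z) crystal_scheme \<Rightarrow> ('i \<Rightarrow> nat) \<Rightarrow> nat \<Rightarrow> 'b" where
  "ground C lam = (\<lambda>n. bbar C lam (Suc n))"

definition tail_start :: "('i, 'b, 'z) crystal_scheme \<Rightarrow> ('i \<Rightarrow> nat) \<Rightarrow> (nat \<Rightarrow> 'b) \<Rightarrow> nat" where
  "tail_start C lam p = (LEAST N. \<forall>n\<ge>N. p n = ground C lam n)"

text \<open>For a truncation T, the path is u_{lambda_T} \<otimes> p(T) \<otimes> ... \<otimes> p(1),
u_{lambda_T} highest weight (eps = 0, phi = lambda_T). pre_ep gives (eps_i, phi_i) of
u \<otimes> p(T) \<otimes> ... \<otimes> p(T-k+1) (k factors after u).\<close>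
fun pre_ep :: "('i, 'b, 'z) crystal_scheme \<Rightarrow> ('i \<Rightarrow> nat) \<Rightarrow> nat \<Rightarrow> (nat \<Rightarrow> 'b) \<Rightarrow> 'i \<Rightarrow> nat
    \<Rightarrow> int \<times> int" where
  "pre_ep C tp T p i 0 = (0, int (tp i))"
| "pre_ep C tp T p i (Suc k) =
     (let e1 = fst (pre_ep C tp T p i k); f1 = snd (pre_ep C tp T p i k);
          b = p (T - Suc k); e2 = int (eps C i b); f2 = int (phi C i b)
      in (max e1 (e1 + e2 - f1), max f2 (f1 + f2 - e2)))"

fun pre_f :: "('i, 'b, 'z) crystal_scheme \<Rightarrow> ('i \<Rightarrow> nat) \<Rightarrow> nat \<Rightarrow> (nat \<Rightarrow> 'b) \<Rightarrow> 'i \<Rightarrow> nat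
    \<Rightarrow> (nat \<Rightarrow> 'b) option" where
  "pre_f C tp T p i 0 = None"
| "pre_f C tp T p i (Suc k) =
     (let b = p (T - Suc k); f1 = snd (pre_ep C tp T p i k)
      in if int (eps C i b) < f1 then pre_f C tp T p i k
         else map_option (\<lambda>b'. p(T - Suc k := b')) (ff C i b))"

fun pre_e :: "('i, 'b, 'z) crystal_scheme \<Rightarrow> ('i \<Rightarrow> nat) \<Rightarrow> nat \<Rightarrow> (nat \<Rightarrow> 'b) \<Rightarrow> 'i \<Rightarrow> nat
    \<Rightarrow> (nat \<Rightarrow> 'b) option" where
  "pre_e C tp T p i 0 = None"
| "pre_e C tp T p i (Suc k) =
     (let b = p (T - Suc k); f1 = snd (pre_ep C tp T p i k)
      in if int (eps C i b) \<le> f1 then pre_e C tp T p i k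
         else map_option (\<lambda>b'. p(T - Suc k := b')) (ee C i b))"

definition path_f :: "('i, 'b, 'z) crystal_scheme \<Rightarrow> ('i \<Rightarrow> nat) \<Rightarrow> 'i \<Rightarrow> (nat \<Rightarrow> 'b)
    \<Rightarrow> (nat \<Rightarrow> 'b) option" where
  "path_f C lam i p = (let T = Suc (tail_start C lam p) in pre_f C (lamk C lam T) T p i T)"

definition path_e :: "('i, 'b, 'z) crystal_scheme \<Rightarrow> ('i \<Rightarrow> nat) \<Rightarrow> 'i \<Rightarrow> (nat \<Rightarrow> 'b)
    \<Rightarrow> (nat \<Rightarrow> 'b) option" where
  "path_e C lam i p = (let T = Suc (tail_start C lam p) in pre_e C (lamk C lam T) T p i T)"

definition refl :: "('i \<Rightarrow> 'i \<Rightarrow> int) \<Rightarrow> 'i \<Rightarrow> ('i \<Rightarrow> int) \<Rightarrow> 'i \<Rightarrow> int" where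
  "refl A i mu = (\<lambda>j. mu j - mu i * A j i)"

text \<open>weyl_act A [i_k, ..., i_1] mu = r_{i_k} ... r_{i_1} mu.\<close>
fun weyl_act :: "('i \<Rightarrow> 'i \<Rightarrow> int) \<Rightarrow> 'i list \<Rightarrow> ('i \<Rightarrow> int) \<Rightarrow> 'i \<Rightarrow> int" where
  "weyl_act A [] mu = mu"
| "weyl_act A (i # ws) mu = refl A i (weyl_act A ws mu)"

text \<open>Extremal vector u_{w lambda} in P(lambda,B) for w = r_{i_k} ... r_{i_1}, via
u_{r_i w lambda} = f_i^{<w lambda, h_i>} u_{w lambda} if <w lambda,h_i> >= 0 and
e_i^{-<w lambda, h_i>} u_{w lambda} otherwise; u_lambda = ground state path.\<close>
fun ext_path :: "('i \<Rightarrow> 'i \<Rightarrow> int) \<Rightarrow> ('i, 'b, 'z) crystal_scheme \<Rightarrow> ('i \<Rightarrow> nat) \<Rightarrow> 'i list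
    \<Rightarrow> (nat \<Rightarrow> 'b) option" where
  "ext_path A C lam [] = Some (ground C lam)"
| "ext_path A C lam (i # ws) =
     (let n = weyl_act A ws (\<lambda>j. int (lam j)) i
      in Option.bind (ext_path A C lam ws)
           (\<lambda>p. if 0 \<le> n then iter_opt (path_f C lam i) (nat n) p
                else iter_opt (path_e C lam i) (nat (- n)) p))"

definition fmax :: "('i, 'b, 'z) crystal_scheme \<Rightarrow> 'i \<Rightarrow> 'b \<Rightarrow> 'b" where
  "fmax C i b = the (iter_opt (ff C i) (phi C i b) b)"

text \<open>bseq C lam idx j a = b^{(j)}_a, idx j a = i^{(j)}_a.\<close>
fun bseq :: "('i, 'b, 'z) crystal_scheme \<Rightarrow> ('i \<Rightarrow> nat) \<Rightarrow> (nat \<Rightarrow> nat \<Rightarrow> 'i) \<Rightarrow> nat \<Rightarrow> nat \<Rightarrow> 'b" where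
  "bseq C lam idx j 0 = bbar C lam j"
| "bseq C lam idx j (Suc a) = fmax C (idx j (Suc a)) (bseq C lam idx j a)"

fun Bset :: "('i, 'b, 'z) crystal_scheme \<Rightarrow> ('i \<Rightarrow> nat) \<Rightarrow> (nat \<Rightarrow> nat \<Rightarrow> 'i) \<Rightarrow> nat \<Rightarrow> nat \<Rightarrow> 'b set" where
  "Bset C lam idx j 0 = {bbar C lam j}"
| "Bset C lam idx j (Suc a) =
     {b'. \<exists>b\<in>Bset C lam idx j a. \<exists>n. iter_opt (ff C (idx j (Suc a))) n b = Some b'}"

text \<open>wword idx d k is a word for w^{(k)}: w^{(k)} = r_{i^{(j)}_a} w^{(k-1)},
k = (j-1)d + a.\<close>
fun wword :: "(nat \<Rightarrow> nat \<Rightarrow> 'i) \<Rightarrow> nat \<Rightarrow> nat \<Rightarrow> 'i list" where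
  "wword idx d 0 = []"
| "wword idx d (Suc k) = idx (k div d + 1) (k mod d + 1) # wword idx d k"

definition pos_j :: "nat \<Rightarrow> nat \<Rightarrow> nat" where
  "pos_j d k = (if k = 0 then 1 else (k - 1) div d + 1)"

definition pos_a :: "nat \<Rightarrow> nat \<Rightarrow> nat" where
  "pos_a d k = (if k = 0 then 0 else (k - 1) mod d + 1)"

end

theory Submission
  imports Defs
begin

text \<open>
  In the path model the extremal vector u_(r_i w\<lambda>) is f_i^n u_(w\<lambda>) with n = \<langle>w\<lambda>, h_i\<rangle>,
  and n is the h_i-component of the weight of the path u_(w\<lambda>). So one follows, reflection by
  reflection, how such a string of f_i acts on a path \<cdots> \<otimes> b_(j+2) \<otimes> b_(j+1) \<otimes> c^(\<otimes>j)
  by the tensor product rule. When \<epsilon>_i(c) = 0, f_i reaches a copy of c only after the copies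
  to its left are exhausted, so the copies are lowered maximally one after another. Inside a
  block (a < d), condition (III) and \<epsilon>_i(c) = 0 force \<langle>\<lambda>_j, h_i\<rangle> = 0: the ground state
  part is untouched and c = b^(j)_a becomes b^(j)_(a+1). At the end of a block the first
  \<langle>\<lambda>_j, h_i\<rangle> operators lower b_(j+1) to b^(j+1)_1; since b^(j)_d reaches b_(j+1) along its
  i-string, the remaining ones turn every copy of b^(j)_d into b^(j+1)_1 as well.
\<close>

lemma iter_opt_0 [simp]: "iter_opt g 0 b = Some b"
  by (simp add: iter_opt_def)

lemma iter_opt_Suc: "iter_opt g (Suc n) b = Option.bind (g b) (iter_opt g n)"
proof -
  have "((\<lambda>x. Option.bind x g) ^^ n) None = None" for n
    by (induction n) simp_all
  then show ?thesis
    unfolding iter_opt_def funpow_Suc_right by (cases "g b") simp_all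
qed

lemma iter_opt_add: "iter_opt g (m + n) b = Option.bind (iter_opt g m b) (iter_opt g n)"
proof (induction m arbitrary: b)
  case (Suc m)
  show ?case
    by (cases "g b") (simp_all add: iter_opt_Suc Suc.IH)
qed simp

lemma iter_opt_Some_iff_le_maxiter:
  assumes "iter_opt g N b = None"
  shows "iter_opt g n b \<noteq> None \<longleftrightarrow> n \<le> maxiter g b"
proof -
  have down: "iter_opt g m b \<noteq> None" if "iter_opt g n b \<noteq> None" "m \<le> n" for m n
    using that iter_opt_add[of g m "n - m" b] by (cases "iter_opt g m b") auto
  have bounded: "n \<le> N" if "iter_opt g n b \<noteq> None" for n
    using down[OF that, of N] assms by fastforce
  have "iter_opt g (maxiter g b) b \<noteq> None"
    unfolding maxiter_def by (rule GreatestI_nat[of _ 0]) (use bounded in auto)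
  then show ?thesis
    using down bounded Greatest_le_nat[of "\<lambda>n. iter_opt g n b \<noteq> None"]
    unfolding maxiter_def by blast
qed

lemma maxiter_Some:
  assumes "g b = Some b'" and "iter_opt g N b = None"
  shows "maxiter g b = Suc (maxiter g b')"
proof -
  obtain N' where "N = Suc N'"
    using assms(2) by (cases N) auto
  then have "iter_opt g N' b' = None"
    using assms by (simp add: iter_opt_Suc)
  moreover have "iter_opt g (Suc n) b = iter_opt g n b'" for n
    using assms(1) by (simp add: iter_opt_Suc)
  ultimately have "Suc n \<le> maxiter g b \<longleftrightarrow> n \<le> maxiter g b'" for n
    using iter_opt_Some_iff_le_maxiter[OF assms(2)] iter_opt_Some_iff_le_maxiter by metis
  then show ?thesis
    by (metis le_antisym le_refl not0_implies_Suc not_less_eq_eq Suc_le_eq)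
qed

locale seminormal_crystal =
  fixes A :: "'i \<Rightarrow> 'i \<Rightarrow> int" and C :: "('i, 'b, 'z) crystal_scheme"
  assumes is_crystal: "is_crystal A C"
begin

lemma ff_iff_ee: "ff C i b = Some b' \<longleftrightarrow> ee C i b' = Some b"
  using is_crystal unfolding is_crystal_def by blast

lemma wt_ff: "ff C i b = Some b' \<Longrightarrow> wt C b' = (\<lambda>j. wt C b j - A j i)"
  using is_crystal unfolding is_crystal_def by blast

lemma wt_eq_phi_minus_eps: "wt C b i = int (phi C i b) - int (eps C i b)"
  using is_crystal unfolding is_crystal_def by metis

lemma ee_terminates: "\<exists>N. iter_opt (ee C i) N b = None"
  using is_crystal unfolding is_crystal_def by blast

lemma ff_terminates: "\<exists>N. iter_opt (ff C i) N b = None"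
  using is_crystal unfolding is_crystal_def by blast

lemma phi_ff: "ff C i b = Some b' \<Longrightarrow> phi C i b = Suc (phi C i b')"
  unfolding phi_def using ff_terminates maxiter_Some by metis

lemma eps_ff: "ff C i b = Some b' \<Longrightarrow> eps C i b' = Suc (eps C i b)"
  unfolding eps_def using ee_terminates maxiter_Some ff_iff_ee by metis

lemma phi_eq_0_iff: "phi C i b = 0 \<longleftrightarrow> ff C i b = None"
proof -
  obtain N where "iter_opt (ff C i) N b = None"
    using ff_terminates by blast
  from iter_opt_Some_iff_le_maxiter[OF this, of 1] show ?thesis
    by (cases "ff C i b") (auto simp: phi_def iter_opt_Suc)
qed

lemma fmax_ff: "ff C i b = Some b' \<Longrightarrow> fmax C i b' = fmax C i b"
  unfolding fmax_def by (simp add: phi_ff iter_opt_Suc)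

lemma iter_opt_ff_Some:
  "iter_opt (ff C i) n b = Some b' \<Longrightarrow>
     phi C i b = n + phi C i b' \<and> eps C i b' = eps C i b + n \<and> fmax C i b' = fmax C i b"
proof (induction n arbitrary: b)
  case (Suc n)
  then obtain b1 where "ff C i b = Some b1" "iter_opt (ff C i) n b1 = Some b'"
    by (cases "ff C i b") (auto simp: iter_opt_Suc)
  with Suc.IH show ?case
    by (simp add: phi_ff eps_ff fmax_ff)
qed simp

lemma iter_opt_fmax: "iter_opt (ff C i) (phi C i b) b = Some (fmax C i b)"
proof -
  obtain N where "iter_opt (ff C i) N b = None"
    using ff_terminates by blast
  from iter_opt_Some_iff_le_maxiter[OF this, of "phi C i b"] show ?thesis
    by (auto simp: fmax_def phi_def)
qed

lemma phi_fmax: "phi C i (fmax C i b) = 0"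
  and eps_fmax: "eps C i (fmax C i b) = eps C i b + phi C i b"
  using iter_opt_ff_Some[OF iter_opt_fmax] by simp_all

lemma fmax_eq_self: "phi C i b = 0 \<Longrightarrow> fmax C i b = b"
  by (simp add: fmax_def)

lemma bseq_in_Bset: "bseq C lam idx j a \<in> Bset C lam idx j a"
  by (induction a) (use iter_opt_fmax in auto)

end

locale path_crystal =
  fixes A :: "'i::finite \<Rightarrow> 'i \<Rightarrow> int" and C :: "('i, 'b::finite, 'z) crystal_scheme"
    and i0 :: 'i and l :: nat and lam :: "'i \<Rightarrow> nat"
  assumes perfect: "perfect_crystal A i0 C l" and lam_level: "level A lam = l"

sublocale path_crystal \<subseteq> seminormal_crystal
  using perfect by unfold_locales (simp add: perfect_crystal_def)

context path_crystal
begin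

lemma level_eps_vec: "level A (eps_vec C b) = level A (phi_vec C b)"
proof -
  have "levelz A (wt C b) = 0"
    using perfect unfolding perfect_crystal_def by blast
  moreover have "int (level A (phi_vec C b)) = int (level A (eps_vec C b)) + levelz A (wt C b)"
    unfolding level_def levelz_def phi_vec_def eps_vec_def
    by (simp add: of_nat_sum sum.distrib[symmetric] algebra_simps wt_eq_phi_minus_eps)
  ultimately show ?thesis
    by simp
qed

lemma phi_vec_bmu:
  assumes "level A mu = l"
  shows "phi_vec C (bmu C mu) = mu"
proof -
  have bij: "bij_betw (phi_vec C) {b. level A (phi_vec C b) = l} {mu. level A mu = l}"
    using perfect unfolding perfect_crystal_def by blast
  then obtain b where b: "level A (phi_vec C b) = l" "phi_vec C b = mu"
    using assms unfolding bij_betw_def by (metis (mono_tags, lifting) imageE mem_Collect_eq)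
  moreover have "b' = b" if "phi_vec C b' = mu" for b'
    using bij b that assms unfolding bij_betw_def inj_on_def by auto
  ultimately have "bmu C mu = b"
    unfolding bmu_def by blast
  with b show ?thesis
    by simp
qed

lemma level_lamk: "level A (lamk C lam k) = l"
proof (induction k)
  case (Suc k)
  then show ?case
    using level_eps_vec phi_vec_bmu by (simp add: lamk_def sigma_def)
qed (simp add: lamk_def lam_level)

lemma phi_bbar: "phi C i (bbar C lam (Suc k)) = lamk C lam k i"
  using phi_vec_bmu[OF level_lamk] by (simp add: bbar_def phi_vec_def fun_eq_iff)

lemma eps_bbar: "eps C i (bbar C lam (Suc k)) = lamk C lam (Suc k) i"
  by (simp add: bbar_def lamk_def sigma_def eps_vec_def)

lemma wt_bbar: "wt C (bbar C lam (Suc k)) i = int (lamk C lam k i) - int (lamk C lam (Suc k) i)"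
  by (simp add: wt_eq_phi_minus_eps phi_bbar eps_bbar)

end

section \<open>The tensor product rule on truncated paths\<close>

abbreviation ground_from :: "('i, 'b, 'z) crystal_scheme \<Rightarrow> ('i \<Rightarrow> nat) \<Rightarrow> nat \<Rightarrow> (nat \<Rightarrow> 'b) \<Rightarrow> bool"
  where "ground_from C lam N p \<equiv> \<forall>n\<ge>N. p n = ground C lam n"

lemma tail_start_le: "ground_from C lam N p \<Longrightarrow> tail_start C lam p \<le> N"
  unfolding tail_start_def by (rule Least_le)

lemma ground_from_tail_start: "ground_from C lam N p \<Longrightarrow> ground_from C lam (tail_start C lam p) p"
  unfolding tail_start_def by (rule LeastI)

text \<open>
  left_phi C lam T p i m is \<phi>_i of u_(\<lambda>_T) \<otimes> p (T - 1) \<otimes> \<cdots> \<otimes> p m, the factors of the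
  truncated path in positions \<ge> m, and left_f C lam T p i m applies f_i to it by the tensor
  product rule (None when f_i would act on u_(\<lambda>_T)).
\<close>

definition left_phi :: "('i, 'b, 'z) crystal_scheme \<Rightarrow> ('i \<Rightarrow> nat) \<Rightarrow> nat \<Rightarrow> (nat \<Rightarrow> 'b) \<Rightarrow> 'i \<Rightarrow> nat \<Rightarrow> int"
  where "left_phi C lam T p i m = snd (pre_ep C (lamk C lam T) T p i (T - m))"

definition left_f :: "('i, 'b, 'z) crystal_scheme \<Rightarrow> ('i \<Rightarrow> nat) \<Rightarrow> nat \<Rightarrow> (nat \<Rightarrow> 'b) \<Rightarrow> 'i \<Rightarrow> nat
    \<Rightarrow> (nat \<Rightarrow> 'b) option"
  where "left_f C lam T p i m = pre_f C (lamk C lam T) T p i (T - m)"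

lemma left_phi_top: "T \<le> m \<Longrightarrow> left_phi C lam T p i m = int (lamk C lam T i)"
  by (simp add: left_phi_def)

lemma left_phi_below:
  assumes "m < T"
  shows "left_phi C lam T p i m =
    max (int (phi C i (p m))) (left_phi C lam T p i (Suc m) + int (phi C i (p m)) - int (eps C i (p m)))"
proof -
  have "T - m = Suc (T - Suc m)" "T - Suc (T - Suc m) = m"
    using assms by simp_all
  then show ?thesis
    unfolding left_phi_def by (simp add: Let_def)
qed

lemma left_f_top: "T \<le> m \<Longrightarrow> left_f C lam T p i m = None"
  by (simp add: left_f_def)

lemma left_f_below:
  assumes "m < T"
  shows "left_f C lam T p i m =
    (if int (eps C i (p m)) < left_phi C lam T p i (Suc m) then left_f C lam T p i (Suc m)
     else map_option (\<lambda>b'. p(m := b')) (ff C i (p m)))"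
proof -
  have "T - m = Suc (T - Suc m)" "T - Suc (T - Suc m) = m"
    using assms by simp_all
  then show ?thesis
    unfolding left_f_def left_phi_def by (simp add: Let_def)
qed

lemma path_f_eq_left_f: "path_f C lam i p = left_f C lam (Suc (tail_start C lam p)) p i 0"
  by (simp add: path_f_def left_f_def Let_def)

lemma left_phi_cong:
  "(\<And>n. m \<le> n \<Longrightarrow> n < T \<Longrightarrow> p n = q n) \<Longrightarrow> left_phi C lam T p i m = left_phi C lam T q i m"
proof (induction "T - m" arbitrary: m)
  case 0
  then show ?case
    by (simp add: left_phi_top)
next
  case (Suc k)
  then have "left_phi C lam T p i (Suc m) = left_phi C lam T q i (Suc m)" "p m = q m"
    by simp_all
  with Suc.hyps show ?case
    by (simp add: left_phi_below)
qed

lemma left_f_Some: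
  "left_f C lam T p i m = Some p' \<Longrightarrow>
     \<exists>r b'. m \<le> r \<and> r < T \<and> ff C i (p r) = Some b' \<and> p' = p(r := b')"
proof (induction "T - m" arbitrary: m)
  case 0
  then show ?case
    by (simp add: left_f_top)
next
  case (Suc k)
  then have "m < T"
    by simp
  show ?case
  proof (cases "int (eps C i (p m)) < left_phi C lam T p i (Suc m)")
    case True
    with Suc.prems \<open>m < T\<close> have "left_f C lam T p i (Suc m) = Some p'"
      by (simp add: left_f_below)
    moreover have "k = T - Suc m"
      using Suc.hyps(2) by simp
    ultimately obtain r b' where "Suc m \<le> r" "r < T" "ff C i (p r) = Some b'" "p' = p(r := b')"
      using Suc.hyps(1) by blast
    then show ?thesis
      by (intro exI[of _ r] exI[of _ b']) simp
  next
    case False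
    with Suc.prems \<open>m < T\<close> show ?thesis
      by (auto simp: left_f_below)
  qed
qed

text \<open>
  Signature rule: the factors below r have \<epsilon>_i = 0, so \<phi>_i of the part to their left stays
  positive and f_i passes them by.
\<close>

lemma left_f_acts_at:
  assumes "r < T" and "0 < phi C i (p r)"
    and "left_phi C lam T p i (Suc r) \<le> int (eps C i (p r))"
    and "\<forall>m<r. eps C i (p m) = 0"
  shows "left_f C lam T p i 0 = map_option (\<lambda>b'. p(r := b')) (ff C i (p r))"
proof -
  have left_phi_pos: "0 < left_phi C lam T p i m" if "m \<le> r" for m
    using that
  proof (induction m rule: inc_induct)
    case base
    show ?case
      using assms(1,2) by (simp add: left_phi_below)
  next
    case (step m)
    then show ?case
      using assms(1,4) by (simp add: left_phi_below)
  qed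
  have "left_f C lam T p i m = map_option (\<lambda>b'. p(r := b')) (ff C i (p r))" if "m \<le> r" for m
    using that
  proof (induction m rule: inc_induct)
    case base
    have "\<not> int (eps C i (p r)) < left_phi C lam T p i (Suc r)"
      using assms(3) by simp
    with assms(1) show ?case
      by (simp only: left_f_below if_False)
  next
    case (step m)
    then show ?case
      using assms(1,4) left_phi_pos[of "Suc m"] by (simp add: left_f_below)
  qed
  then show ?thesis
    by simp
qed

lemma left_phi_eq_0_after_fmax:
  assumes "r < T" and "phi C i (p r) = 0"
    and "left_phi C lam T p i (Suc r) \<le> int (eps C i (p r))"
  shows "left_phi C lam T p i r = 0"
  using assms by (simp add: left_phi_below)

context path_crystal
begin

lemma left_phi_Suc_trunc:
  assumes "p T = bbar C lam (Suc T)" and "m \<le> T"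
  shows "left_phi C lam (Suc T) p i m = left_phi C lam T p i m"
  using assms(2)
proof (induction m rule: inc_induct)
  case base
  show ?case
    using assms(1) by (simp add: left_phi_below left_phi_top phi_bbar eps_bbar)
next
  case (step m)
  then show ?case
    by (simp add: left_phi_below)
qed

lemma left_f_Suc_trunc:
  assumes "p (Suc T) = bbar C lam (Suc (Suc T))" and "p T = bbar C lam (Suc T)" and "m \<le> T"
  shows "left_f C lam (Suc (Suc T)) p i m = left_f C lam (Suc T) p i m"
  using assms(3)
proof (induction m rule: inc_induct)
  case base
  have "left_phi C lam (Suc (Suc T)) p i (Suc T) = int (eps C i (p T))"
    using assms by (simp add: left_phi_Suc_trunc left_phi_top eps_bbar)
  moreover have "left_phi C lam (Suc T) p i (Suc T) = int (eps C i (p T))"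
    using assms by (simp add: left_phi_top eps_bbar)
  ultimately show ?case
    by (simp add: left_f_below)
next
  case (step m)
  then show ?case
    using assms(1) by (simp add: left_f_below left_phi_Suc_trunc)
qed

lemma path_f_eq_left_f_ge:
  assumes "ground_from C lam N p" and "N < T"
  shows "path_f C lam i p = left_f C lam T p i 0"
proof -
  define N0 where "N0 = tail_start C lam p"
  have ground: "ground_from C lam N0 p"
    unfolding N0_def using assms(1) by (rule ground_from_tail_start)
  have "Suc N0 \<le> T"
    unfolding N0_def using tail_start_le[OF assms(1)] assms(2) by simp
  then have "left_f C lam T p i 0 = left_f C lam (Suc N0) p i 0"
  proof (induction T rule: dec_induct)
    case (step T)
    then obtain T' where "T = Suc T'" "N0 \<le> T'"
      by (cases T) auto
    with step ground show ?case
      by (simp add: left_f_Suc_trunc ground_def)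
  qed simp
  then show ?thesis
    by (simp add: path_f_eq_left_f N0_def)
qed

lemma iter_path_f_at:
  assumes "ground_from C lam N p" and "N < T" and "r < N"
    and "left_phi C lam T p i (Suc r) \<le> int (eps C i (p r))"
    and "\<forall>m<r. eps C i (p m) = 0"
  shows "iter_opt (path_f C lam i) (phi C i (p r)) p = Some (p(r := fmax C i (p r)))"
proof -
  have "iter_opt (path_f C lam i) n p = Some (p(r := fmax C i (p r)))" if "phi C i (p r) = n" for n
    using that assms(1,4,5)
  proof (induction n arbitrary: p)
    case 0
    then show ?case
      by (simp add: fmax_eq_self)
  next
    case (Suc n)
    then obtain b' where b': "ff C i (p r) = Some b'"
      using phi_eq_0_iff[of i "p r"] by (cases "ff C i (p r)") simp_all
    define p' where "p' = p(r := b')"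
    have "path_f C lam i p = left_f C lam T p i 0"
      using Suc.prems(2) assms(2) by (rule path_f_eq_left_f_ge)
    also have "\<dots> = Some p'"
    proof -
      have "r < T" "0 < phi C i (p r)"
        using assms(2,3) Suc.prems(1) by simp_all
      from left_f_acts_at[OF this Suc.prems(3,4)] show ?thesis
        by (simp add: b' p'_def)
    qed
    finally have step: "path_f C lam i p = Some p'" .
    have "left_phi C lam T p' i (Suc r) = left_phi C lam T p i (Suc r)"
      by (rule left_phi_cong) (simp add: p'_def)
    moreover have "eps C i (p r) \<le> eps C i (p' r)" "phi C i (p' r) = n"
      using Suc.prems(1) phi_ff[OF b'] eps_ff[OF b'] by (simp_all add: p'_def)
    moreover have "ground_from C lam N p'" "\<forall>m<r. eps C i (p' m) = 0"
      using Suc.prems(2,4) assms(3) by (simp_all add: p'_def)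
    ultimately have "iter_opt (path_f C lam i) n p' = Some (p'(r := fmax C i (p' r)))"
      using Suc.prems(3) by (intro Suc.IH) simp_all
    then show ?case
      using step fmax_ff[OF b'] by (simp add: iter_opt_Suc p'_def fun_eq_iff)
  qed
  then show ?thesis
    by simp
qed

lemma iter_path_f_block:
  assumes "ground_from C lam N p" and "N < T" and "s \<le> N"
    and "left_phi C lam T p i s = 0" and "eps C i c = 0" and "\<forall>m<s. p m = c"
  shows "iter_opt (path_f C lam i) (s * phi C i c) p = Some (\<lambda>m. if m < s then fmax C i c else p m)"
  using assms(1,3,4,6)
proof (induction s arbitrary: p)
  case (Suc s)
  define p1 where "p1 = p(s := fmax C i c)"
  have "p s = c"
    using Suc.prems(4) by simp
  then have first: "iter_opt (path_f C lam i) (phi C i c) p = Some p1"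
    using iter_path_f_at[of N p T s i] Suc.prems assms(2,5) by (simp add: p1_def)
  have "left_phi C lam T p1 i (Suc s) = left_phi C lam T p i (Suc s)"
    by (rule left_phi_cong) (simp add: p1_def)
  then have "left_phi C lam T p1 i s = 0"
    using Suc.prems(2,3) assms(2) by (intro left_phi_eq_0_after_fmax) (simp_all add: p1_def phi_fmax)
  moreover have "ground_from C lam N p1" "s \<le> N" "\<forall>m<s. p1 m = c"
    using Suc.prems(1,2,4) by (simp_all add: p1_def)
  ultimately have "iter_opt (path_f C lam i) (s * phi C i c) p1
      = Some (\<lambda>m. if m < s then fmax C i c else p1 m)"
    using Suc.IH by blast
  moreover have "(\<lambda>m. if m < s then fmax C i c else p1 m) = (\<lambda>m. if m < Suc s then fmax C i c else p m)"
    by (auto simp: p1_def)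
  ultimately show ?case
    using first by (simp add: iter_opt_add[of _ "phi C i c"])
qed simp

end

section \<open>Weights of paths and tensor powers\<close>

definition trunc_wt :: "('i, 'b, 'z) crystal_scheme \<Rightarrow> ('i \<Rightarrow> nat) \<Rightarrow> nat \<Rightarrow> (nat \<Rightarrow> 'b) \<Rightarrow> 'i \<Rightarrow> int"
  where "trunc_wt C lam T p x = int (lamk C lam T x) + (\<Sum>n<T. wt C (p n) x)"

definition path_wt :: "('i, 'b, 'z) crystal_scheme \<Rightarrow> ('i \<Rightarrow> nat) \<Rightarrow> (nat \<Rightarrow> 'b) \<Rightarrow> 'i \<Rightarrow> int"
  where "path_wt C lam p = trunc_wt C lam (tail_start C lam p) p"

definition power_path :: "('i, 'b, 'z) crystal_scheme \<Rightarrow> ('i \<Rightarrow> nat) \<Rightarrow> nat \<Rightarrow> 'b \<Rightarrow> nat \<Rightarrow> 'b"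
  where "power_path C lam j c = (\<lambda>n. if n < j then c else ground C lam n)"

text \<open>q = f_i^n p with n = \<langle>wt p, h_i\<rangle>: one step of the recursion defining ext_path.\<close>

definition extremal_step :: "('i, 'b, 'z) crystal_scheme \<Rightarrow> ('i \<Rightarrow> nat) \<Rightarrow> 'i \<Rightarrow> (nat \<Rightarrow> 'b) \<Rightarrow> (nat \<Rightarrow> 'b)
    \<Rightarrow> bool"
  where "extremal_step C lam i p q \<longleftrightarrow>
    (\<exists>n. int n = path_wt C lam p i \<and> iter_opt (path_f C lam i) n p = Some q)"

lemma ground_from_power_path: "ground_from C lam j (power_path C lam j c)"
  by (simp add: power_path_def)

lemma power_path_0: "power_path C lam 0 c = ground C lam"
  by (simp add: power_path_def)

context path_crystal
begin

lemma path_wt_eq_trunc_wt: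
  assumes "ground_from C lam N p" and "N \<le> T"
  shows "path_wt C lam p = trunc_wt C lam T p"
proof -
  have "tail_start C lam p \<le> T"
    using tail_start_le[OF assms(1)] assms(2) by simp
  then show ?thesis
  proof (induction T rule: dec_induct)
    case (step T)
    then have "p T = bbar C lam (Suc T)"
      using ground_from_tail_start[OF assms(1)] by (simp add: ground_def)
    with step.IH show ?case
      by (simp add: trunc_wt_def wt_bbar fun_eq_iff)
  qed (simp add: path_wt_def)
qed

lemma path_wt_path_f:
  assumes "ground_from C lam N p" and "path_f C lam i p = Some p'"
  shows "ground_from C lam (Suc N) p' \<and> path_wt C lam p' = (\<lambda>x. path_wt C lam p x - A x i)"
proof -
  have "left_f C lam (Suc (tail_start C lam p)) p i 0 = Some p'"
    using assms(2) by (simp add: path_f_eq_left_f)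
  from left_f_Some[OF this] obtain r b' where r: "r < Suc (tail_start C lam p)"
    and b': "ff C i (p r) = Some b'" and p': "p' = p(r := b')"
    by blast
  have "r < Suc N"
    using r tail_start_le[OF assms(1)] by simp
  then have ground': "ground_from C lam (Suc N) p'"
    using assms(1) p' by auto
  have "wt C (p' n) x = wt C (p n) x - (if n = r then A x i else 0)" for n x
    using wt_ff[OF b'] p' by simp
  then have "(\<Sum>n<Suc N. wt C (p' n) x) = (\<Sum>n<Suc N. wt C (p n) x) - A x i" for x
    using \<open>r < Suc N\<close> by (simp add: sum_subtractf)
  then have "path_wt C lam p' = (\<lambda>x. path_wt C lam p x - A x i)"
    using path_wt_eq_trunc_wt[OF ground' le_refl] path_wt_eq_trunc_wt[OF assms(1), of "Suc N"]
    by (simp add: trunc_wt_def fun_eq_iff)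
  with ground' show ?thesis
    by simp
qed

lemma path_wt_iter_path_f:
  assumes "ground_from C lam N p" and "iter_opt (path_f C lam i) n p = Some p'"
  shows "path_wt C lam p' = (\<lambda>x. path_wt C lam p x - int n * A x i)"
  using assms
proof (induction n arbitrary: N p)
  case (Suc n)
  then obtain p1 where p1: "path_f C lam i p = Some p1" "iter_opt (path_f C lam i) n p1 = Some p'"
    by (cases "path_f C lam i p") (simp_all add: iter_opt_Suc)
  with path_wt_path_f[OF Suc.prems(1) p1(1)] Suc.IH show ?case
    by (fastforce simp: algebra_simps)
qed simp

lemma path_wt_power_path:
  "path_wt C lam (power_path C lam j c) x = int (lamk C lam j x) + int j * wt C c x"
  using path_wt_eq_trunc_wt[OF ground_from_power_path le_refl]
  by (simp add: trunc_wt_def power_path_def)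

lemma extremal_step_power_path_within:
  assumes "eps C i c = 0" and "lamk C lam j i = 0"
  shows "extremal_step C lam i (power_path C lam j c) (power_path C lam j (fmax C i c))"
proof -
  let ?P = "power_path C lam j c"
  have "left_phi C lam (Suc j) ?P i j = left_phi C lam j ?P i j"
    by (rule left_phi_Suc_trunc) (simp_all add: power_path_def ground_def)
  also have "\<dots> = 0"
    using assms(2) by (simp add: left_phi_top)
  finally have "iter_opt (path_f C lam i) (j * phi C i c) ?P
      = Some (\<lambda>m. if m < j then fmax C i c else ?P m)"
    using assms(1) by (intro iter_path_f_block[where N = j]) (simp_all add: power_path_def)
  also have "(\<lambda>m. if m < j then fmax C i c else ?P m) = power_path C lam j (fmax C i c)"
    by (auto simp: power_path_def)
  finally have "iter_opt (path_f C lam i) (j * phi C i c) ?P = Some (power_path C lam j (fmax C i c))" .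
  moreover have "int (j * phi C i c) = path_wt C lam ?P i"
    using assms by (simp add: path_wt_power_path wt_eq_phi_minus_eps)
  ultimately show ?thesis
    unfolding extremal_step_def by blast
qed

text \<open>
  The first \<langle>\<lambda>_j, h_i\<rangle> operators lower b_(j+1); the others lower the copies of c, which end
  where b_(j+1) does because b_(j+1) lies on the i-string of c.
\<close>

lemma extremal_step_power_path_across:
  assumes "0 < j \<longrightarrow> eps C i c = 0 \<and>
    iter_opt (ff C i) (lamk C lam (Suc j) i) c = Some (bbar C lam (Suc j))"
  shows "extremal_step C lam i (power_path C lam j c)
    (power_path C lam (Suc j) (fmax C i (bbar C lam (Suc j))))"
proof -
  let ?P = "power_path C lam j c" and ?T = "Suc (Suc j)" and ?b = "bbar C lam (Suc j)"
  define P1 where "P1 = ?P(j := fmax C i ?b)"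
  have ground: "ground_from C lam (Suc j) ?P"
    by (simp add: power_path_def)
  have P_j: "?P j = ?b"
    by (simp add: power_path_def ground_def)
  have "left_phi C lam ?T ?P i (Suc j) = left_phi C lam (Suc j) ?P i (Suc j)"
    by (rule left_phi_Suc_trunc) (simp_all add: power_path_def ground_def)
  then have left_phi_j: "left_phi C lam ?T ?P i (Suc j) = int (eps C i (?P j))"
    by (simp add: left_phi_top P_j eps_bbar)
  have "\<forall>m<j. eps C i (?P m) = 0"
    using assms by (simp add: power_path_def)
  then have first: "iter_opt (path_f C lam i) (lamk C lam j i) ?P = Some P1"
    using iter_path_f_at[OF ground _ _ left_phi_j[THEN eq_refl]]
    by (simp add: P1_def P_j phi_bbar)
  have "left_phi C lam ?T P1 i (Suc j) = left_phi C lam ?T ?P i (Suc j)"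
    by (rule left_phi_cong) (simp add: P1_def)
  then have "left_phi C lam ?T P1 i j = 0"
    using left_phi_j P_j by (intro left_phi_eq_0_after_fmax) (simp_all add: P1_def phi_fmax eps_fmax)
  then have "iter_opt (path_f C lam i) (j * phi C i c) P1
      = Some (\<lambda>m. if m < j then fmax C i c else P1 m)"
    using assms ground by (cases "j = 0")
      (simp, intro iter_path_f_block[where N = "Suc j"], simp_all add: P1_def power_path_def)
  moreover have "(\<lambda>m. if m < j then fmax C i c else P1 m) = power_path C lam (Suc j) (fmax C i ?b)"
    using assms iter_opt_ff_Some[of i "lamk C lam (Suc j) i" c ?b]
    by (auto simp: P1_def power_path_def ground_def)
  ultimately have "iter_opt (path_f C lam i) (lamk C lam j i + j * phi C i c) ?P
      = Some (power_path C lam (Suc j) (fmax C i ?b))"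
    using first by (simp add: iter_opt_add)
  moreover have "int (lamk C lam j i + j * phi C i c) = path_wt C lam ?P i"
    using assms by (cases "j = 0") (simp_all add: path_wt_power_path wt_eq_phi_minus_eps)
  ultimately show ?thesis
    unfolding extremal_step_def by blast
qed

end

section \<open>The extremal vectors\<close>

lemma pos_0: "pos_j d 0 = 1" "pos_a d 0 = 0"
  by (simp_all add: pos_j_def pos_a_def)

lemma pos_Suc: "pos_j d (Suc k) = k div d + 1" "pos_a d (Suc k) = k mod d + 1"
  by (simp_all add: pos_j_def pos_a_def)

lemma pos_a_le: "0 < d \<Longrightarrow> pos_a d k \<le> d"
  by (cases k) (simp_all add: pos_a_def Suc_leI)

lemma pos_Suc_within:
  "pos_a d k < d \<Longrightarrow> pos_j d (Suc k) = pos_j d k \<and> pos_a d (Suc k) = Suc (pos_a d k)"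
  by (cases k) (simp_all add: pos_j_def pos_a_def div_Suc mod_Suc)

lemma pos_Suc_across:
  "0 < d \<Longrightarrow> pos_a d k = d \<Longrightarrow> pos_j d (Suc k) = Suc (pos_j d k) \<and> pos_a d (Suc k) = 1"
  by (cases k) (simp_all add: pos_j_def pos_a_def div_Suc mod_Suc)

locale extremal_path_data = path_crystal A C i0 l lam
  for A :: "'i::finite \<Rightarrow> 'i \<Rightarrow> int" and C :: "('i, 'b::finite, 'z) crystal_scheme"
    and i0 l lam +
  fixes d :: nat and idx :: "nat \<Rightarrow> nat \<Rightarrow> 'i"
  assumes d_pos: "d > 0"
    and III: "\<forall>j\<ge>1. \<forall>a\<in>{1..d}. \<forall>b\<in>Bset C lam idx j (a - 1).
                 lamk C lam j (idx j a) \<le> eps C (idx j a) b"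
    and cond_eps_phi: "\<forall>j\<ge>1. \<forall>a\<in>{1..d}.
         (let i' = (if a = d then idx (Suc j) 1 else idx j (Suc a))
          in eps C i' (bseq C lam idx j a) = 0 \<and> phi C i' (bseq C lam idx j a) > 0)"
    and cond_next: "\<forall>j\<ge>1. iter_opt (ff C (idx (Suc j) 1))
            (lamk C lam (Suc j) (idx (Suc j) 1)) (bseq C lam idx j d)
          = Some (bbar C lam (Suc j))"
begin

definition idx_at :: "nat \<Rightarrow> 'i"
  where "idx_at k = idx (pos_j d k) (pos_a d k)"

definition path_at :: "nat \<Rightarrow> nat \<Rightarrow> 'b"
  where "path_at k = power_path C lam (pos_j d k) (bseq C lam idx (pos_j d k) (pos_a d k))"

lemma wword_Suc: "wword idx d (Suc k) = idx_at (Suc k) # wword idx d k"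
  by (simp add: idx_at_def pos_Suc)

lemma path_at_0: "path_at 0 = ground C lam"
  by (auto simp: path_at_def power_path_def ground_def pos_0)

lemma extremal_step_path_at_0:
  "extremal_step C lam (idx_at (Suc 0)) (path_at 0) (path_at (Suc 0))"
proof -
  have "path_at (Suc 0) = power_path C lam (Suc 0) (fmax C (idx_at (Suc 0)) (bbar C lam (Suc 0)))"
    by (simp add: path_at_def idx_at_def pos_Suc)
  then show ?thesis
    using extremal_step_power_path_across[of 0 "idx_at (Suc 0)" undefined]
    by (simp add: path_at_0 power_path_0)
qed

lemma extremal_step_path_at_within:
  assumes "0 < k" and "pos_a d k < d"
  shows "extremal_step C lam (idx_at (Suc k)) (path_at k) (path_at (Suc k))"
proof -
  define j a where "j = pos_j d k" and "a = pos_a d k"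
  define i c where "i = idx j (Suc a)" and "c = bseq C lam idx j a"
  have "1 \<le> j" "1 \<le> a" "a < d"
    using assms by (simp_all add: j_def a_def pos_j_def pos_a_def)
  have pos: "pos_j d (Suc k) = j" "pos_a d (Suc k) = Suc a"
    using pos_Suc_within[OF assms(2)] by (simp_all add: j_def a_def)
  have eps_c: "eps C i c = 0"
    using cond_eps_phi[rule_format, OF \<open>1 \<le> j\<close>, of a] \<open>1 \<le> a\<close> \<open>a < d\<close>
    by (simp add: i_def c_def Let_def)
  have "lamk C lam j i \<le> eps C i c"
    using III \<open>1 \<le> j\<close> \<open>a < d\<close> bseq_in_Bset by (simp add: i_def c_def)
  with eps_c have "lamk C lam j i = 0"
    by simp
  with eps_c show ?thesis
    using extremal_step_power_path_within
    by (simp add: idx_at_def path_at_def pos i_def c_def j_def a_def)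
qed

lemma extremal_step_path_at_across:
  assumes "pos_a d k = d"
  shows "extremal_step C lam (idx_at (Suc k)) (path_at k) (path_at (Suc k))"
proof -
  define j where "j = pos_j d k"
  define i c where "i = idx (Suc j) 1" and "c = bseq C lam idx j d"
  have "1 \<le> j"
    by (simp add: j_def pos_j_def)
  have pos: "pos_j d (Suc k) = Suc j" "pos_a d (Suc k) = 1"
    using pos_Suc_across[OF d_pos assms] by (simp_all add: j_def)
  have "eps C i c = 0"
    using cond_eps_phi[rule_format, OF \<open>1 \<le> j\<close>, of d] d_pos by (simp add: i_def c_def Let_def)
  moreover have "iter_opt (ff C i) (lamk C lam (Suc j) i) c = Some (bbar C lam (Suc j))"
    using cond_next \<open>1 \<le> j\<close> by (simp add: i_def c_def)
  moreover have "path_at k = power_path C lam j c"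
    using assms by (simp add: path_at_def j_def c_def)
  moreover have "path_at (Suc k) = power_path C lam (Suc j) (fmax C i (bbar C lam (Suc j)))"
    by (simp add: path_at_def pos i_def)
  ultimately show ?thesis
    using extremal_step_power_path_across[of j i c] by (simp add: idx_at_def pos i_def)
qed

lemma extremal_step_path_at: "extremal_step C lam (idx_at (Suc k)) (path_at k) (path_at (Suc k))"
proof -
  consider "k = 0" | "0 < k" "pos_a d k < d" | "pos_a d k = d"
    using pos_a_le[OF d_pos, of k] by fastforce
  then show ?thesis
    by cases (simp_all add: extremal_step_path_at_0 extremal_step_path_at_within
        extremal_step_path_at_across)
qed

lemma ext_path_wword:
  "ext_path A C lam (wword idx d k) = Some (path_at k) \<and>
   path_wt C lam (path_at k) = weyl_act A (wword idx d k) (\<lambda>x. int (lam x))"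
proof (induction k)
  case 0
  have "path_wt C lam (ground C lam) x = int (lam x)" for x
    using path_wt_power_path[of 0 _ x] by (simp add: power_path_0 lamk_def)
  then show ?case
    by (simp add: path_at_0 fun_eq_iff)
next
  case (Suc k)
  define i where "i = idx_at (Suc k)"
  obtain n where wt_i: "int n = path_wt C lam (path_at k) i"
    and n: "iter_opt (path_f C lam i) n (path_at k) = Some (path_at (Suc k))"
    using extremal_step_path_at unfolding extremal_step_def i_def by blast
  have "ground_from C lam (pos_j d k) (path_at k)"
    by (simp add: path_at_def ground_from_power_path)
  from path_wt_iter_path_f[OF this n]
  have "path_wt C lam (path_at (Suc k)) = refl A i (path_wt C lam (path_at k))"
    by (simp add: refl_def wt_i)
  with Suc.IH n wt_i[symmetric] show ?case
    unfolding wword_Suc i_def[symmetric] by (simp add: Let_def)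
qed

end

theorem mainTheorem1:
  fixes A :: "'i::finite \<Rightarrow> 'i \<Rightarrow> int" and i0 :: 'i
    and C :: "('i, 'b::finite) crystal" and l :: nat
    and lam :: "'i \<Rightarrow> nat" and d :: nat and idx :: "nat \<Rightarrow> nat \<Rightarrow> 'i"
  assumes affine: "affine_gcm A"
    and node0: "special_node A i0"
    and perfect: "perfect_crystal A i0 C l"
    and lam_level: "level A lam = l"
    and d_pos: "d > 0"
    and III: "\<forall>j\<ge>1. \<forall>a\<in>{1..d}. \<forall>b\<in>Bset C lam idx j (a - 1).
                 lamk C lam j (idx j a) \<le> eps C (idx j a) b"
    and cond_eps_phi: "\<forall>j\<ge>1. \<forall>a\<in>{1..d}.
         (let i' = (if a = d then idx (Suc j) 1 else idx j (Suc a))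
          in eps C i' (bseq C lam idx j a) = 0 \<and> phi C i' (bseq C lam idx j a) > 0)"
    and cond_next: "\<forall>j\<ge>1. iter_opt (ff C (idx (Suc j) 1))
            (lamk C lam (Suc j) (idx (Suc j) 1)) (bseq C lam idx j d)
          = Some (bbar C lam (Suc j))"
  shows "\<forall>k. ext_path A C lam (wword idx d k) =
           Some (\<lambda>n. if n < pos_j d k then bseq C lam idx (pos_j d k) (pos_a d k)
                     else bbar C lam (Suc n))"
proof -
  interpret extremal_path_data A C i0 l lam d idx
    using perfect lam_level d_pos III cond_eps_phi cond_next by unfold_locales
  show ?thesis
    using ext_path_wword unfolding path_at_def power_path_def ground_def by simp
qed

end
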